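(* Let $\mathbf{u}=(u_1,u_2),\mathbf{v}=(v_1,v_2)\in\mathbb{R}^2$ be fixed linearly independent unit vectors, and let $D_1\subset\mathbb{R}^2$ be an open disc centered at the origin. Let $\mathbf{f}=(f_1,f_2)$ be a vector field on $\mathbb{R}^2$ with $f_1,f_2\in C^2_c(D_1)$. Then $$\operatorname{div}\mathbf{f}=-\frac{1}{\det(\mathbf{v},\mathbf{u})}\,D_{\mathbf{u}}D_{\mathbf{v}}\,\mathcal{T}\mathbf{f},$$ where $\det(\mathbf{v},\mathbf{u})=v_1u_2-u_1v_2$. In particular, the operator $\mathcal{T}$ is injective (invertible) on compactly supported (in $D_1$, with $C^2$ components) curl-free vector fields.
   Context: For a function $h$ on $\mathbb{R}^2$ and a unit vector $\mathbf{u}$, $\mathcal{X}_{\mathbf{u}}h(\mathbf{x})=\int_0^\infty h(\mathbf{x}+t\mathbf{u})\,dt$ and $D_{\mathbf{u}}h=\mathbf{u}\cdot\nabla h$. For $\mathbf{x}=(x_1,x_2)$ set $\mathbf{x}^\perp=(-x_2,x_1)$. The transverse V-line transform is $\mathcal{T}\mathbf{f}=-\mathcal{X}_{\mathbf{u}}(\mathbf{f}\cdot\mathbf{u}^\perp)+\mathcal{X}_{\mathbf{v}}(\mathbf{f}\cdot\mathbf{v}^\perp)$, a function on $\mathbb{R}^2$. Here $\operatorname{div}\mathbf{f}=\frac{\partial f_1}{\partial x_1}+\frac{\partial f_2}{\partial x_2}$ and curl-free means $\frac{\partial f_2}{\partial x_1}-\frac{\partial f_1}{\partial x_2}=0$.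 *)

theory Defs
  imports "HOL-Analysis.Analysis"
begin

definition perp :: "real^2 \<Rightarrow> real^2" where
  "perp x = vector [- (x$2), x$1]"

definition dirD :: "real^2 \<Rightarrow> (real^2 \<Rightarrow> real) \<Rightarrow> real^2 \<Rightarrow> real" where
  "dirD u h x = frechet_derivative h (at x) u"

definition rayX :: "real^2 \<Rightarrow> (real^2 \<Rightarrow> real) \<Rightarrow> real^2 \<Rightarrow> real" where
  "rayX u h x = integral {0..} (\<lambda>t::real. h (x + t *\<^sub>R u))"

definition TV :: "real^2 \<Rightarrow> real^2 \<Rightarrow> (real^2 \<Rightarrow> real^2) \<Rightarrow> real^2 \<Rightarrow> real" where
  "TV u v f x = - rayX u (\<lambda>y. f y \<bullet> perp u) x + rayX v (\<lambda>y. f y \<bullet> perp v) x"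

definition divg :: "(real^2 \<Rightarrow> real^2) \<Rightarrow> real^2 \<Rightarrow> real" where
  "divg f x = frechet_derivative (\<lambda>y. f y $ 1) (at x) (axis 1 1)
            + frechet_derivative (\<lambda>y. f y $ 2) (at x) (axis 2 1)"

definition curl_free :: "(real^2 \<Rightarrow> real^2) \<Rightarrow> bool" where
  "curl_free f \<longleftrightarrow> (\<forall>x. frechet_derivative (\<lambda>y. f y $ 2) (at x) (axis 1 1)
                         - frechet_derivative (\<lambda>y. f y $ 1) (at x) (axis 2 1) = 0)"

definition C1_fun :: "(real^2 \<Rightarrow> real) \<Rightarrow> bool" where
  "C1_fun h \<longleftrightarrow> (\<exists>g::real^2 \<Rightarrow> real^2. (\<forall>x. (h has_derivative (\<lambda>w. g x \<bullet> w)) (at x))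
                    \<and> continuous_on UNIV g)"

definition C2_fun :: "(real^2 \<Rightarrow> real) \<Rightarrow> bool" where
  "C2_fun h \<longleftrightarrow> (\<exists>g::real^2 \<Rightarrow> real^2. (\<forall>x. (h has_derivative (\<lambda>w. g x \<bullet> w)) (at x))
                    \<and> (\<forall>i. C1_fun (\<lambda>x. g x $ i)))"

definition C2c_on :: "(real^2) set \<Rightarrow> (real^2 \<Rightarrow> real) \<Rightarrow> bool" where
  "C2c_on D h \<longleftrightarrow> C2_fun h \<and> compact (closure {x. h x \<noteq> 0})
                     \<and> closure {x. h x \<noteq> 0} \<subseteq> D"

end

theory Submission
  imports Defs "HOL-Complex_Analysis.Cauchy_Integral_Formula"
begin

text \<open>
  Differentiation commutes with the divergent beam transforms X_u, X_v of compactly supported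
  functions, and X_u (D_u h) = - h by the fundamental theorem of calculus along the ray. Hence
  D_u D_v T f = D_v (f . u-perp) - D_u (f . v-perp), and expanding both directional derivatives in
  coordinates gives - det(v, u) div f. For injectivity, T f = T g forces div (f - g) = 0; together
  with curl (f - g) = 0 these are the Cauchy-Riemann equations for (f - g)_1 - i (f - g)_2, an
  entire function with compact support, which vanishes by Liouville's theorem.
\<close>

definition C1_gradient :: "('a::real_inner \<Rightarrow> real) \<Rightarrow> ('a \<Rightarrow> 'a) \<Rightarrow> bool" where
  "C1_gradient h G \<longleftrightarrow> (\<forall>x. (h has_derivative (\<lambda>w. G x \<bullet> w)) (at x)) \<and> continuous_on UNIV G"

definition C2_gradient :: "('a::real_inner \<Rightarrow> real) \<Rightarrow> ('a \<Rightarrow> 'a) \<Rightarrow> bool" where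
  "C2_gradient h G \<longleftrightarrow> C1_gradient h G \<and> (\<forall>w. \<exists>H. C1_gradient (\<lambda>x. G x \<bullet> w) H)"

lemma C1_gradient_lincomb:
  assumes "C1_gradient h G" and "C1_gradient k K"
  shows "C1_gradient (\<lambda>x. a * h x + b * k x) (\<lambda>x. a *\<^sub>R G x + b *\<^sub>R K x)"
  unfolding C1_gradient_def
proof (intro conjI allI)
  fix x
  have "((\<lambda>x. a * h x + b * k x) has_derivative (\<lambda>w. a * (G x \<bullet> w) + b * (K x \<bullet> w))) (at x)"
    using assms unfolding C1_gradient_def by (intro has_derivative_add has_derivative_mult_right) auto
  then show "((\<lambda>x. a * h x + b * k x) has_derivative (\<lambda>w. (a *\<^sub>R G x + b *\<^sub>R K x) \<bullet> w)) (at x)"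
    by (simp add: inner_add_left)
  show "continuous_on UNIV (\<lambda>x. a *\<^sub>R G x + b *\<^sub>R K x)"
    using assms unfolding C1_gradient_def by (intro continuous_intros) auto
qed

lemma C2_gradient_lincomb:
  assumes h: "C2_gradient h G" and k: "C2_gradient k K"
  shows "C2_gradient (\<lambda>x. a * h x + b * k x) (\<lambda>x. a *\<^sub>R G x + b *\<^sub>R K x)"
  unfolding C2_gradient_def
proof (intro conjI allI)
  show "C1_gradient (\<lambda>x. a * h x + b * k x) (\<lambda>x. a *\<^sub>R G x + b *\<^sub>R K x)"
    using h k unfolding C2_gradient_def by (blast intro: C1_gradient_lincomb)
  fix w
  obtain HG HK where "C1_gradient (\<lambda>x. G x \<bullet> w) HG" "C1_gradient (\<lambda>x. K x \<bullet> w) HK"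
    using h k unfolding C2_gradient_def by blast
  from C1_gradient_lincomb[OF this, of a b]
  show "\<exists>H. C1_gradient (\<lambda>x. (a *\<^sub>R G x + b *\<^sub>R K x) \<bullet> w) H"
    by (auto simp: inner_add_left)
qed

lemma C1_gradient_imp_continuous: "C1_gradient h G \<Longrightarrow> continuous_on UNIV h"
  unfolding C1_gradient_def
  by (blast intro: continuous_at_imp_continuous_on has_derivative_continuous)

lemma inner_2: "(x::real^2) \<bullet> y = x $ 1 * y $ 1 + x $ 2 * y $ 2"
  by (simp add: inner_vec_def sum_2)

lemma C2c_on_imp_C2_gradient:
  assumes "C2c_on D h"
  obtains G where "C2_gradient h G"
proof -
  obtain g where hg: "\<forall>x. (h has_derivative (\<lambda>w. g x \<bullet> w)) (at x)"
    and gi: "\<And>i. \<exists>H. C1_gradient (\<lambda>x. g x $ i) H"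
    using assms unfolding C2c_on_def C2_fun_def C1_fun_def C1_gradient_def by blast
  have "continuous_on UNIV (\<lambda>x. \<chi> i. g x $ i)"
    using gi by (intro continuous_on_vec_lambda) (blast intro: C1_gradient_imp_continuous)
  then have "C1_gradient h g"
    using hg by (simp add: C1_gradient_def)
  moreover have "\<exists>H. C1_gradient (\<lambda>x. g x \<bullet> w) H" for w
  proof -
    obtain H1 H2 where "C1_gradient (\<lambda>x. g x $ 1) H1" "C1_gradient (\<lambda>x. g x $ 2) H2"
      using gi by blast
    from C1_gradient_lincomb[OF this, of "w $ 1" "w $ 2"] show ?thesis
      by (auto simp: inner_2 mult.commute)
  qed
  ultimately show thesis
    using that by (auto simp: C2_gradient_def)
qed

lemma C2c_on_ball_eq_0:
  assumes "C2c_on (ball 0 r) h" and "r \<le> norm y"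
  shows "h y = 0"
proof (rule ccontr)
  assume "h y \<noteq> 0"
  then have "y \<in> closure {x. h x \<noteq> 0}"
    using closure_subset[of "{x. h x \<noteq> 0}"] by auto
  moreover have "closure {x. h x \<noteq> 0} \<subseteq> ball 0 r"
    using assms(1) by (simp add: C2c_on_def)
  ultimately have "y \<in> ball 0 r"
    by blast
  then show False
    using assms(2) by simp
qed

lemma gradient_eq_0_outside_cball:
  fixes h :: "'a::real_inner \<Rightarrow> real"
  assumes h: "(h has_derivative (\<lambda>w. G \<bullet> w)) (at y)"
    and supp: "\<forall>z. R < norm z \<longrightarrow> h z = 0" and y: "R < norm y"
  shows "G = 0"
proof -
  have "(h has_derivative (\<lambda>w. 0)) (at y)"
    by (rule has_derivative_transform_within_open[OF has_derivative_const, of "{z. R < norm z}"])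
       (use supp y in \<open>auto intro: open_Collect_less continuous_intros\<close>)
  then have "(\<lambda>w. G \<bullet> w) = (\<lambda>w. 0)"
    using h has_derivative_unique by blast
  then show ?thesis
    by (metis inner_eq_zero_iff)
qed

lemma rayX_eq_integral:
  fixes u x :: "real^2"
  assumes u: "norm u = 1" and supp: "\<forall>y. R < norm y \<longrightarrow> h y = 0" and T: "norm x + R \<le> T"
  shows "rayX u h x = integral {0..T} (\<lambda>t. h (x + t *\<^sub>R u))"
proof -
  have "h (x + t *\<^sub>R u) = 0" if "T < t" for t
  proof -
    have "t - norm x \<le> norm (x + t *\<^sub>R u)"
      using norm_diff_ineq[of "t *\<^sub>R u" x] u by (simp add: add.commute)
    then show ?thesis
      using supp T that by fastforce
  qed
  then have "rayX u h x = integral {0..} (\<lambda>t. if t \<in> {0..T} then h (x + t *\<^sub>R u) else 0)"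
    unfolding rayX_def by (intro integral_cong) auto
  also have "\<dots> = integral ({0..T} \<inter> {0..}) (\<lambda>t. h (x + t *\<^sub>R u))"
    by (rule integral_restrict_Int)
  also have "{0..T} \<inter> {0..} = {0..T::real}"
    by auto
  finally show ?thesis .
qed

lemma has_derivative_integral_along_ray:
  fixes u x :: "'a::euclidean_space"
  assumes h: "C1_gradient h G"
  shows "((\<lambda>y. integral {0..T} (\<lambda>t. h (y + t *\<^sub>R u))) has_derivative
      (\<lambda>w. integral {0..T} (\<lambda>t. G (x + t *\<^sub>R u) \<bullet> w))) (at x)"
proof -
  have hG: "(h has_derivative (\<lambda>w. G y \<bullet> w)) (at y)" for y
    using h by (simp add: C1_gradient_def)
  have G_cont: "continuous_on UNIV G"
    using h by (simp add: C1_gradient_def)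
  have h_cont: "continuous_on UNIV h"
    using h by (rule C1_gradient_imp_continuous)
  have "((\<lambda>y. integral (cbox 0 T) (\<lambda>t. h (y + t *\<^sub>R u))) has_derivative
        integral (cbox 0 T) (\<lambda>t. blinfun_inner_left (G (x + t *\<^sub>R u)))) (at x within UNIV)"
  proof (rule leibniz_rule[where f="\<lambda>y t. h (y + t *\<^sub>R u)"
        and fx="\<lambda>y t. blinfun_inner_left (G (y + t *\<^sub>R u))" and U=UNIV])
    fix y and t :: real
    show "((\<lambda>y. h (y + t *\<^sub>R u)) has_derivative blinfun_apply (blinfun_inner_left (G (y + t *\<^sub>R u))))
        (at y within UNIV)"
      using has_derivative_compose[of "\<lambda>y. y + t *\<^sub>R u" "\<lambda>w. w" y UNIV h, OF _ hG]
      by (simp add: has_derivative_add_const inner_commute)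
    show "(\<lambda>t. h (y + t *\<^sub>R u)) integrable_on cbox 0 T"
      by (intro integrable_continuous continuous_on_compose2[OF h_cont] continuous_intros) auto
    show "continuous_on (UNIV \<times> cbox 0 T) (\<lambda>(y, t). blinfun_inner_left (G (y + t *\<^sub>R u)))"
      unfolding case_prod_unfold
      by (intro continuous_on_compose2[OF G_cont] continuous_intros) auto
  qed auto
  moreover have "(\<lambda>t. blinfun_inner_left (G (x + t *\<^sub>R u))) integrable_on cbox 0 T"
    by (intro integrable_continuous continuous_on_compose2[OF G_cont] continuous_intros) auto
  then have "blinfun_apply (integral (cbox 0 T) (\<lambda>t. blinfun_inner_left (G (x + t *\<^sub>R u)))) w
      = integral {0..T} (\<lambda>t. G (x + t *\<^sub>R u) \<bullet> w)" for w
    by (simp add: blinfun_apply_integral inner_commute)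
  ultimately show ?thesis
    by (simp add: has_derivative_eq_rhs[OF _ ext])
qed

lemma rayX_has_derivative:
  fixes u x :: "real^2"
  assumes u: "norm u = 1" and h: "C1_gradient h G" and supp: "\<forall>y. R < norm y \<longrightarrow> h y = 0"
  shows "(rayX u h has_derivative (\<lambda>w. rayX u (\<lambda>y. G y \<bullet> w) x)) (at x)"
proof -
  define T where "T = norm x + R + 1"
  have hG: "(h has_derivative (\<lambda>w. G y \<bullet> w)) (at y)" for y
    using h by (simp add: C1_gradient_def)
  have near: "integral {0..T} (\<lambda>t. h (y + t *\<^sub>R u)) = rayX u h y" if "y \<in> ball x 1" for y
  proof -
    have "norm y \<le> norm x + 1"
      using that norm_triangle_ineq2[of y x] by (simp add: dist_norm norm_minus_commute)
    then show ?thesis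
      by (intro rayX_eq_integral[OF u supp, symmetric]) (simp add: T_def)
  qed
  have "(rayX u h has_derivative (\<lambda>w. integral {0..T} (\<lambda>t. G (x + t *\<^sub>R u) \<bullet> w))) (at x)"
    by (rule has_derivative_transform_within_open[OF has_derivative_integral_along_ray[OF h],
          where s="ball x 1"]) (auto simp: near)
  moreover have "\<forall>y. R < norm y \<longrightarrow> G y \<bullet> w = 0" for w
    using gradient_eq_0_outside_cball[OF hG supp] by simp
  then have "integral {0..T} (\<lambda>t. G (x + t *\<^sub>R u) \<bullet> w) = rayX u (\<lambda>y. G y \<bullet> w) x" for w
    by (intro rayX_eq_integral[OF u, where R=R, symmetric]) (simp_all add: T_def)
  ultimately show ?thesis
    by simp
qed

lemma rayX_derivative_along_ray:
  fixes u x :: "real^2"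
  assumes u: "norm u = 1" and hG: "\<forall>y. (h has_derivative (\<lambda>w. G y \<bullet> w)) (at y)"
    and supp: "\<forall>y. R < norm y \<longrightarrow> h y = 0"
  shows "rayX u (\<lambda>y. G y \<bullet> u) x = - h x"
proof -
  define T where "T = norm x + \<bar>R\<bar> + 1"
  have "((\<lambda>t. G (x + t *\<^sub>R u) \<bullet> u) has_integral h (x + T *\<^sub>R u) - h (x + 0 *\<^sub>R u)) {0..T}"
  proof (rule fundamental_theorem_of_calculus)
    show "0 \<le> T"
      by (simp add: T_def)
    fix t
    have "((\<lambda>t. x + t *\<^sub>R u) has_derivative (\<lambda>s. s *\<^sub>R u)) (at t within {0..T})"
      by (auto intro!: derivative_eq_intros)
    from has_derivative_compose[OF this hG[rule_format]]
    show "((\<lambda>t. h (x + t *\<^sub>R u)) has_vector_derivative G (x + t *\<^sub>R u) \<bullet> u) (at t within {0..T})"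
      by (simp add: has_vector_derivative_def mult.commute)
  qed
  moreover have "h (x + T *\<^sub>R u) = 0"
  proof -
    have "T - norm x \<le> norm (x + T *\<^sub>R u)"
      using norm_diff_ineq[of "T *\<^sub>R u" x] u by (simp add: add.commute)
    then have "R < norm (x + T *\<^sub>R u)"
      by (simp add: T_def)
    then show ?thesis
      using supp by blast
  qed
  ultimately have "integral {0..T} (\<lambda>t. G (x + t *\<^sub>R u) \<bullet> u) = - h x"
    by (simp add: integral_unique)
  moreover have "\<forall>y. R < norm y \<longrightarrow> G y \<bullet> u = 0"
    using gradient_eq_0_outside_cball[OF hG[rule_format] supp] by simp
  then have "rayX u (\<lambda>y. G y \<bullet> u) x = integral {0..T} (\<lambda>t. G (x + t *\<^sub>R u) \<bullet> u)"
    by (rule rayX_eq_integral[OF u]) (simp add: T_def)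
  ultimately show ?thesis
    by simp
qed

lemma dirD_eq: "(h has_derivative h') (at x) \<Longrightarrow> dirD w h x = h' w"
  unfolding dirD_def by (metis frechet_derivative_at)

lemma dirD_dirD_rayX_diff:
  fixes u v :: "real^2"
  assumes u: "norm u = 1" and v: "norm v = 1"
    and a: "C2_gradient a A" and b: "C1_gradient b B"
    and supp: "\<forall>y. R < norm y \<longrightarrow> a y = 0 \<and> b y = 0"
  shows "dirD u (dirD v (\<lambda>x. - rayX u a x + rayX v b x)) x = A x \<bullet> v - B x \<bullet> u"
proof -
  have a1: "C1_gradient a A"
    using a by (simp add: C2_gradient_def)
  obtain K where K: "C1_gradient (\<lambda>y. A y \<bullet> v) K"
    using a by (auto simp: C2_gradient_def)
  have a_supp: "\<forall>y. R < norm y \<longrightarrow> a y = 0" and b_supp: "\<forall>y. R < norm y \<longrightarrow> b y = 0"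
    using supp by auto
  have "A y = 0" if "R < norm y" for y
    using a1 that by (intro gradient_eq_0_outside_cball[OF _ a_supp]) (auto simp: C1_gradient_def)
  then have Av_supp: "\<forall>y. R < norm y \<longrightarrow> A y \<bullet> v = 0"
    by simp
  have DV: "dirD v (\<lambda>x. - rayX u a x + rayX v b x) = (\<lambda>y. - rayX u (\<lambda>z. A z \<bullet> v) y - b y)"
  proof
    fix y
    have "((\<lambda>x. - rayX u a x + rayX v b x) has_derivative
        (\<lambda>w. - rayX u (\<lambda>z. A z \<bullet> w) y + rayX v (\<lambda>z. B z \<bullet> w) y)) (at y)"
      by (intro has_derivative_add has_derivative_minus rayX_has_derivative[OF u a1 a_supp]
          rayX_has_derivative[OF v b b_supp])
    then show "dirD v (\<lambda>x. - rayX u a x + rayX v b x) y = - rayX u (\<lambda>z. A z \<bullet> v) y - b y"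
      using rayX_derivative_along_ray[OF v _ b_supp, of B y] b by (simp add: dirD_eq C1_gradient_def)
  qed
  have "((\<lambda>y. - rayX u (\<lambda>z. A z \<bullet> v) y - b y) has_derivative
      (\<lambda>w. - rayX u (\<lambda>z. K z \<bullet> w) x - B x \<bullet> w)) (at x)"
    using b by (intro has_derivative_diff has_derivative_minus rayX_has_derivative[OF u K Av_supp])
      (simp add: C1_gradient_def)
  then have "dirD u (dirD v (\<lambda>x. - rayX u a x + rayX v b x)) x = - rayX u (\<lambda>z. K z \<bullet> u) x - B x \<bullet> u"
    unfolding DV by (rule dirD_eq)
  also have "rayX u (\<lambda>z. K z \<bullet> u) x = - (A x \<bullet> v)"
    using K by (intro rayX_derivative_along_ray[OF u _ Av_supp]) (simp add: C1_gradient_def)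
  finally show ?thesis
    by simp
qed

lemma inner_perp: "y \<bullet> perp w = - w $ 2 * y $ 1 + w $ 1 * y $ 2"
  by (simp add: perp_def inner_2)

lemma divg_eq_gradient:
  assumes "((\<lambda>y. f y $ 1) has_derivative (\<lambda>w. G1 \<bullet> w)) (at x)"
    and "((\<lambda>y. f y $ 2) has_derivative (\<lambda>w. G2 \<bullet> w)) (at x)"
  shows "divg f x = G1 $ 1 + G2 $ 2"
  using assms by (simp add: divg_def frechet_derivative_at[symmetric] inner_axis)

lemma curl_free_iff_gradient:
  assumes "\<forall>x. ((\<lambda>y. f y $ 1) has_derivative (\<lambda>w. G1 x \<bullet> w)) (at x)"
    and "\<forall>x. ((\<lambda>y. f y $ 2) has_derivative (\<lambda>w. G2 x \<bullet> w)) (at x)"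
  shows "curl_free f \<longleftrightarrow> (\<forall>x. G2 x $ 1 = G1 x $ 2)"
proof -
  have "frechet_derivative (\<lambda>y. f y $ 1) (at x) = (\<lambda>w. G1 x \<bullet> w)"
    and "frechet_derivative (\<lambda>y. f y $ 2) (at x) = (\<lambda>w. G2 x \<bullet> w)" for x
    using assms frechet_derivative_at by metis+
  then show ?thesis
    by (simp add: curl_free_def inner_axis)
qed

lemma divg_eq_dirD_dirD_TV:
  fixes u v :: "real^2" and f :: "real^2 \<Rightarrow> real^2"
  assumes u: "norm u = 1" and v: "norm v = 1" and det: "v$1 * u$2 - u$1 * v$2 \<noteq> 0"
    and f1: "C2c_on (ball 0 r) (\<lambda>x. f x $ 1)" and f2: "C2c_on (ball 0 r) (\<lambda>x. f x $ 2)"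
  shows "divg f x = - (1 / (v$1 * u$2 - u$1 * v$2)) * dirD u (dirD v (TV u v f)) x"
proof -
  obtain G1 G2 where G1: "C2_gradient (\<lambda>x. f x $ 1) G1" and G2: "C2_gradient (\<lambda>x. f x $ 2) G2"
    using C2c_on_imp_C2_gradient[OF f1] C2c_on_imp_C2_gradient[OF f2] by metis
  have grad_perp: "C2_gradient (\<lambda>x. f x \<bullet> perp w) (\<lambda>x. (- w$2) *\<^sub>R G1 x + w$1 *\<^sub>R G2 x)" for w
    unfolding inner_perp by (rule C2_gradient_lincomb[OF G1 G2])
  have supp: "\<forall>y. r < norm y \<longrightarrow> f y \<bullet> perp u = 0 \<and> f y \<bullet> perp v = 0"
    using C2c_on_ball_eq_0[OF f1] C2c_on_ball_eq_0[OF f2] by (simp add: inner_perp)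
  have TV: "TV u v f = (\<lambda>x. - rayX u (\<lambda>y. f y \<bullet> perp u) x + rayX v (\<lambda>y. f y \<bullet> perp v) x)"
    by (simp add: fun_eq_iff TV_def)
  have "dirD u (dirD v (TV u v f)) x
      = ((- u$2) *\<^sub>R G1 x + u$1 *\<^sub>R G2 x) \<bullet> v - ((- v$2) *\<^sub>R G1 x + v$1 *\<^sub>R G2 x) \<bullet> u"
    unfolding TV
    by (rule dirD_dirD_rayX_diff[OF u v grad_perp _ supp]) (use grad_perp in \<open>simp add: C2_gradient_def\<close>)
  moreover have "divg f x = G1 x $ 1 + G2 x $ 2"
    using G1 G2 by (intro divg_eq_gradient) (simp_all add: C2_gradient_def C1_gradient_def)
  ultimately show ?thesis
    using det by (simp add: inner_2 field_simps)
qed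

definition vec_of_complex :: "complex \<Rightarrow> real^2" where
  "vec_of_complex z = vector [Re z, Im z]"

lemma vec_of_complex_nth [simp]: "vec_of_complex z $ 1 = Re z" "vec_of_complex z $ 2 = Im z"
  by (simp_all add: vec_of_complex_def)

lemma bounded_linear_vec_of_complex: "bounded_linear vec_of_complex"
  unfolding linear_conv_bounded_linear[symmetric]
  by (rule linearI) (simp_all add: vec_eq_iff forall_2)

lemma norm_vec_of_complex [simp]: "norm (vec_of_complex z) = norm z"
  by (simp add: norm_vec_def L2_set_def sum_2 cmod_def)

lemma div_free_curl_free_bounded_support_eq_0:
  fixes g P Q :: "real^2 \<Rightarrow> real^2"
  assumes P: "\<forall>x. ((\<lambda>y. g y $ 1) has_derivative (\<lambda>w. P x \<bullet> w)) (at x)"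
    and Q: "\<forall>x. ((\<lambda>y. g y $ 2) has_derivative (\<lambda>w. Q x \<bullet> w)) (at x)"
    and div: "\<forall>x. divg g x = 0" and curl: "curl_free g"
    and supp: "\<forall>y. R < norm y \<longrightarrow> g y = 0"
  shows "g x = 0"
proof -
  have CR: "Q y $ 2 = - P y $ 1" "Q y $ 1 = P y $ 2" for y
  proof -
    have "divg g y = P y $ 1 + Q y $ 2"
      using P Q by (intro divg_eq_gradient) auto
    then show "Q y $ 2 = - P y $ 1"
      using div by simp
    show "Q y $ 1 = P y $ 2"
      using curl curl_free_iff_gradient[OF P Q] by simp
  qed
  \<comment> \<open>CR are precisely the Cauchy-Riemann equations for F.\<close>
  define F where "F z = complex_of_real (g (vec_of_complex z) $ 1) - \<i> * complex_of_real (g (vec_of_complex z) $ 2)" for z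
  have "(F has_field_derivative Complex (P (vec_of_complex z) $ 1) (- P (vec_of_complex z) $ 2)) (at z)" for z
  proof -
    have lin: "(vec_of_complex has_derivative vec_of_complex) (at z)"
      by (rule bounded_linear_imp_has_derivative[OF bounded_linear_vec_of_complex])
    have "((\<lambda>z. g (vec_of_complex z) $ 1) has_derivative (\<lambda>w. P (vec_of_complex z) \<bullet> vec_of_complex w)) (at z)"
      and "((\<lambda>z. g (vec_of_complex z) $ 2) has_derivative (\<lambda>w. Q (vec_of_complex z) \<bullet> vec_of_complex w)) (at z)"
      using has_derivative_compose[OF lin P[rule_format]] has_derivative_compose[OF lin Q[rule_format]]
      by simp_all
    then have "(F has_derivative (\<lambda>w. complex_of_real (P (vec_of_complex z) \<bullet> vec_of_complex w)
        - \<i> * complex_of_real (Q (vec_of_complex z) \<bullet> vec_of_complex w))) (at z)"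
      unfolding F_def by (intro has_derivative_diff has_derivative_mult_right has_derivative_of_real)
    moreover have "(\<lambda>w. complex_of_real (P (vec_of_complex z) \<bullet> vec_of_complex w)
        - \<i> * complex_of_real (Q (vec_of_complex z) \<bullet> vec_of_complex w))
        = (*) (Complex (P (vec_of_complex z) $ 1) (- P (vec_of_complex z) $ 2))"
      by (auto simp: fun_eq_iff complex_eq_iff inner_2 CR algebra_simps)
    ultimately show ?thesis
      by (simp add: has_field_derivative_def)
  qed
  then have "F holomorphic_on UNIV"
    unfolding holomorphic_on_def field_differentiable_def
    using has_field_derivative_at_within by blast
  moreover have "(F \<longlongrightarrow> 0) at_infinity"
  proof (rule tendsto_eventually)
    show "\<forall>\<^sub>F z in at_infinity. F z = 0"
      unfolding eventually_at_infinity F_def using supp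
      by (intro exI[of _ "R + 1"]) auto
  qed
  ultimately have "F (Complex (x $ 1) (x $ 2)) = 0"
    by (rule Liouville_weak_0)
  moreover have "vec_of_complex (Complex (x $ 1) (x $ 2)) = x"
    by (simp add: vec_eq_iff forall_2)
  ultimately show ?thesis
    by (simp add: F_def complex_eq_iff vec_eq_iff forall_2)
qed

lemma curl_free_eq_if_divg_eq:
  fixes f g :: "real^2 \<Rightarrow> real^2"
  assumes f1: "C2c_on (ball 0 r) (\<lambda>x. f x $ 1)" and f2: "C2c_on (ball 0 r) (\<lambda>x. f x $ 2)"
    and g1: "C2c_on (ball 0 r) (\<lambda>x. g x $ 1)" and g2: "C2c_on (ball 0 r) (\<lambda>x. g x $ 2)"
    and curl_f: "curl_free f" and curl_g: "curl_free g" and div: "\<forall>x. divg f x = divg g x"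
  shows "f = g"
proof -
  obtain F1 F2 G1 G2
    where "C2_gradient (\<lambda>x. f x $ 1) F1" "C2_gradient (\<lambda>x. f x $ 2) F2"
      and "C2_gradient (\<lambda>x. g x $ 1) G1" "C2_gradient (\<lambda>x. g x $ 2) G2"
    using C2c_on_imp_C2_gradient f1 f2 g1 g2 by metis
  then have F1: "\<forall>x. ((\<lambda>y. f y $ 1) has_derivative (\<lambda>w. F1 x \<bullet> w)) (at x)"
    and F2: "\<forall>x. ((\<lambda>y. f y $ 2) has_derivative (\<lambda>w. F2 x \<bullet> w)) (at x)"
    and G1: "\<forall>x. ((\<lambda>y. g y $ 1) has_derivative (\<lambda>w. G1 x \<bullet> w)) (at x)"
    and G2: "\<forall>x. ((\<lambda>y. g y $ 2) has_derivative (\<lambda>w. G2 x \<bullet> w)) (at x)"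
    by (simp_all add: C2_gradient_def C1_gradient_def)
  define h where "h x = f x - g x" for x
  have H1: "\<forall>x. ((\<lambda>y. h y $ 1) has_derivative (\<lambda>w. (F1 x - G1 x) \<bullet> w)) (at x)"
    and H2: "\<forall>x. ((\<lambda>y. h y $ 2) has_derivative (\<lambda>w. (F2 x - G2 x) \<bullet> w)) (at x)"
    using F1 F2 G1 G2 by (auto simp: h_def inner_diff_left intro: has_derivative_diff)
  have "divg h x = divg f x - divg g x" for x
    using divg_eq_gradient[OF F1[rule_format] F2[rule_format]] divg_eq_gradient[OF G1[rule_format] G2[rule_format]]
      divg_eq_gradient[OF H1[rule_format] H2[rule_format]] by simp
  then have "\<forall>x. divg h x = 0"
    using div by simp
  moreover have "curl_free h"
    using curl_f curl_g curl_free_iff_gradient[OF F1 F2] curl_free_iff_gradient[OF G1 G2]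
      curl_free_iff_gradient[OF H1 H2] by simp
  moreover have "\<forall>y. r < norm y \<longrightarrow> h y = 0"
    using C2c_on_ball_eq_0[OF f1] C2c_on_ball_eq_0[OF f2] C2c_on_ball_eq_0[OF g1] C2c_on_ball_eq_0[OF g2]
    by (simp add: h_def vec_eq_iff forall_2)
  ultimately have "h x = 0" for x
    by (rule div_free_curl_free_bounded_support_eq_0[OF H1 H2])
  then show ?thesis
    by (simp add: h_def fun_eq_iff)
qed

lemma det_neq_0_if_independent:
  fixes u v :: "real^2"
  assumes "u \<noteq> 0" and indep: "\<forall>a b::real. a *\<^sub>R u + b *\<^sub>R v = 0 \<longrightarrow> a = 0 \<and> b = 0"
  shows "v$1 * u$2 - u$1 * v$2 \<noteq> 0"
proof
  assume det: "v$1 * u$2 - u$1 * v$2 = 0"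
  have "v$1 *\<^sub>R u + (- u$1) *\<^sub>R v = 0" and "v$2 *\<^sub>R u + (- u$2) *\<^sub>R v = 0"
    using det by (simp_all add: vec_eq_iff forall_2 algebra_simps)
  then have "- u$1 = 0" and "- u$2 = 0"
    using indep by blast+
  then show False
    using \<open>u \<noteq> 0\<close> by (simp add: vec_eq_iff forall_2)
qed

theorem theorem4:
  fixes u v :: "real^2" and r :: real
  assumes "norm u = 1" and "norm v = 1"
    and "\<forall>a b::real. a *\<^sub>R u + b *\<^sub>R v = 0 \<longrightarrow> a = 0 \<and> b = 0"
    and "r > 0"
  shows "(\<forall>f::real^2 \<Rightarrow> real^2. C2c_on (ball 0 r) (\<lambda>x. f x $ 1) \<and> C2c_on (ball 0 r) (\<lambda>x. f x $ 2) \<longrightarrow>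
            (\<forall>x. divg f x = - (1 / (v$1 * u$2 - u$1 * v$2)) * dirD u (dirD v (TV u v f)) x))
       \<and> inj_on (TV u v) {f. C2c_on (ball 0 r) (\<lambda>x. f x $ 1) \<and> C2c_on (ball 0 r) (\<lambda>x. f x $ 2)
                               \<and> curl_free f}"
proof -
  have "u \<noteq> 0"
    using assms(1) by auto
  then have det: "v$1 * u$2 - u$1 * v$2 \<noteq> 0"
    using assms(3) by (rule det_neq_0_if_independent)
  have formula: "\<forall>f::real^2 \<Rightarrow> real^2. C2c_on (ball 0 r) (\<lambda>x. f x $ 1) \<and> C2c_on (ball 0 r) (\<lambda>x. f x $ 2) \<longrightarrow>
      (\<forall>x. divg f x = - (1 / (v$1 * u$2 - u$1 * v$2)) * dirD u (dirD v (TV u v f)) x)"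
    using divg_eq_dirD_dirD_TV[OF assms(1,2) det] by blast
  moreover have "inj_on (TV u v) {f. C2c_on (ball 0 r) (\<lambda>x. f x $ 1) \<and> C2c_on (ball 0 r) (\<lambda>x. f x $ 2)
                               \<and> curl_free f}"
  proof (rule inj_onI, clarify)
    fix f g :: "real^2 \<Rightarrow> real^2"
    assume "TV u v f = TV u v g" and "C2c_on (ball 0 r) (\<lambda>x. f x $ 1)" "C2c_on (ball 0 r) (\<lambda>x. f x $ 2)"
      "curl_free f" "C2c_on (ball 0 r) (\<lambda>x. g x $ 1)" "C2c_on (ball 0 r) (\<lambda>x. g x $ 2)" "curl_free g"
    with formula show "f = g"
      by (intro curl_free_eq_if_divg_eq[of r]) auto
  qed
  ultimately show ?thesis ..
qed

end
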